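(* Assume the Continuum Hypothesis. Let $X$ be a real Banach space with $\operatorname{dens} X = \operatorname{dens} X^* = \omega_1$, and let $C \subseteq X$. If $C$ cannot be covered by countably many hyperplanes of $X$, then $C$ contains an overcomplete set for $X$.
   Context: A hyperplane of a Banach space $X$ is a closed linear subspace of codimension one, i.e. the kernel of a non-zero bounded linear functional. $\operatorname{dens}$ denotes the density character. A subset $S$ of a Banach space $X$ with $|S| = \operatorname{dens} X$ is called overcomplete (for $X$) if every subset $\Lambda \subseteq S$ with $|\Lambda| = |S|$ is linearly dense in $X$ (its closed linear span is $X$). *)

theory Defs
  imports "HOL-Analysis.Analysis"
begin

text \<open>Cardinal comparisons use Main's well-order machinery:
  card_of A is the cardinal of A (as a well-order), ordIso = equal cardinality,
  ordLeq = less-or-equal cardinality; cardSuc natLeq is omega_1 (aleph_1).\<close>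

definition omega1 :: "nat set rel" where
  "omega1 = cardSuc natLeq"

definition has_dens :: "'b rel \<Rightarrow> 'a::topological_space itself \<Rightarrow> bool" where
  "has_dens r (_ :: 'a itself) \<longleftrightarrow>
     (\<exists>D::'a set. closure D = UNIV \<and> (card_of D, r) \<in> ordIso) \<and>
     (\<forall>D::'a set. closure D = UNIV \<longrightarrow> (r, card_of D) \<in> ordLeq)"

definition hyperplane :: "'a::real_normed_vector set \<Rightarrow> bool" where
  "hyperplane H \<longleftrightarrow> (\<exists>f::'a \<Rightarrow>\<^sub>L real. f \<noteq> 0 \<and> H = {x. blinfun_apply f x = 0})"

definition overcomplete :: "'a::real_normed_vector set \<Rightarrow> bool" where
  "overcomplete S \<longleftrightarrow> has_dens (card_of S) TYPE('a) \<and>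
     (\<forall>\<Lambda>\<subseteq>S. (card_of \<Lambda>, card_of S) \<in> ordIso \<longrightarrow> closure (span \<Lambda>) = UNIV)"

definition CH :: bool where
  "CH \<longleftrightarrow> (card_of (UNIV :: real set), omega1) \<in> ordIso"

end

theory Submission
  imports Defs "HOL-Library.Countable_Set_Type"
begin

(* A metric space with a dense set D has at most |D|^omega points, so under CH the dual X* has
   only omega_1 elements and the hyperplanes of X can be listed as H_beta, beta < omega_1. Since C
   is not covered by countably many hyperplanes, for every alpha < omega_1 there is x_alpha in C
   outside all H_beta with beta <= alpha. A hyperplane H_beta then contains x_alpha only for the
   countably many alpha < beta, so S = {x_alpha} has cardinality omega_1 and meets every hyperplane
   in a countable set. By Hahn-Banach a subset of X that is not linearly dense lies in a hyperplane;
   hence every subset of S of cardinality omega_1 is linearly dense. *)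

unbundle cardinal_syntax

section \<open>The first uncountable cardinal\<close>

lemma Card_order_omega1: "Card_order omega1"
  unfolding omega1_def by (rule cardSuc_Card_order[OF natLeq_Card_order])

lemma card_of_Field_omega1: "|Field omega1| =o omega1"
  by (rule card_of_Field_ordIso[OF Card_order_omega1])

lemma uncountable_iff_omega1_ordLeq: "\<not> countable A \<longleftrightarrow> omega1 \<le>o |A|"
proof -
  have "\<not> |A| \<le>o natLeq \<longleftrightarrow> natLeq <o |A|"
    using not_ordLeq_iff_ordLess[OF natLeq_Well_order card_of_Well_order] by blast
  then show ?thesis
    unfolding countable_card_le_natLeq omega1_def
    using cardSuc_ordLess_ordLeq[OF natLeq_Card_order card_of_Card_order] by simp
qed

lemma uncountable_if_ordIso_omega1: "|A| =o omega1 \<Longrightarrow> \<not> countable A"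
  using uncountable_iff_omega1_ordLeq ordIso_iff_ordLeq ordIso_symmetric by metis

lemma countable_underS_omega1: "countable (underS omega1 \<alpha>)"
proof (cases "\<alpha> \<in> Field omega1")
  case True
  have "|underS omega1 \<alpha>| <o omega1" by (rule card_of_underS[OF Card_order_omega1 True])
  then show ?thesis
    unfolding countable_card_le_natLeq omega1_def
    using cardSuc_ordLeq_ordLess[OF natLeq_Card_order card_of_Card_order] by blast
qed (simp add: underS_empty)

lemma countable_under_omega1: "countable (under omega1 \<alpha>)"
proof (rule countable_subset)
  show "under omega1 \<alpha> \<subseteq> insert \<alpha> (underS omega1 \<alpha>)"
    unfolding under_def underS_def by auto
qed (simp add: countable_underS_omega1)

lemma countable_not_above_omega1:
  assumes "\<beta> \<in> Field omega1"
  shows "countable {\<alpha> \<in> Field omega1. (\<beta>, \<alpha>) \<notin> omega1}"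
proof (rule countable_subset)
  have wo: "wo_rel omega1"
    unfolding wo_rel_def by (rule card_order_on_well_order_on[OF Card_order_omega1])
  show "{\<alpha> \<in> Field omega1. (\<beta>, \<alpha>) \<notin> omega1} \<subseteq> underS omega1 \<beta>"
  proof
    fix \<alpha> assume "\<alpha> \<in> {\<alpha> \<in> Field omega1. (\<beta>, \<alpha>) \<notin> omega1}"
    then have "(\<beta>, \<alpha>) \<notin> omega1" "\<alpha> \<in> Field omega1" by auto
    moreover have "(\<beta>, \<beta>) \<in> omega1"
      using assms wo_rel.REFL[OF wo] by (simp add: refl_on_def)
    moreover have "(\<alpha>, \<beta>) \<in> omega1"
      using wo_rel.in_notinI[OF wo] assms calculation by blast
    ultimately show "\<alpha> \<in> underS omega1 \<beta>" unfolding underS_def by auto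
  qed
qed (rule countable_underS_omega1)

lemma card_of_image_Field_omega1:
  assumes "\<And>s. countable {\<alpha> \<in> Field omega1. x \<alpha> = s}"
  shows "|x ` Field omega1| =o omega1"
proof -
  have "\<not> countable (x ` Field omega1)"
  proof
    assume "countable (x ` Field omega1)"
    then have "countable (\<Union>s \<in> x ` Field omega1. {\<alpha> \<in> Field omega1. x \<alpha> = s})"
      using assms by blast
    moreover have "Field omega1 \<subseteq> (\<Union>s \<in> x ` Field omega1. {\<alpha> \<in> Field omega1. x \<alpha> = s})"
      by blast
    ultimately have "countable (Field omega1)" by (rule countable_subset[rotated])
    then show False using uncountable_if_ordIso_omega1[OF card_of_Field_omega1] by blast
  qed
  then have "omega1 \<le>o |x ` Field omega1|" by (simp add: uncountable_iff_omega1_ordLeq)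
  moreover have "|x ` Field omega1| \<le>o omega1"
    using card_of_image card_of_Field_omega1 ordLeq_ordIso_trans by blast
  ultimately show ?thesis by (simp add: ordIso_iff_ordLeq)
qed

lemma ex_omega1_sequence_meeting_sets_countably:
  assumes card: "|\<K>| \<le>o omega1" and "\<K> \<noteq> {}"
    and not_covered: "\<And>\<K>'. \<K>' \<subseteq> \<K> \<Longrightarrow> countable \<K>' \<Longrightarrow> \<not> C \<subseteq> \<Union>\<K>'"
  shows "\<exists>x. x ` Field omega1 \<subseteq> C \<and> (\<forall>K\<in>\<K>. countable {\<alpha> \<in> Field omega1. x \<alpha> \<in> K})"
proof -
  have "|\<K>| \<le>o |Field omega1|"
    using card ordIso_symmetric[OF card_of_Field_omega1] by (rule ordLeq_ordIso_trans)
  then have "\<exists>\<phi>. \<phi> ` Field omega1 = \<K>" by (rule iffD2[OF card_of_ordLeq2[OF \<open>\<K> \<noteq> {}\<close>]])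
  then obtain \<phi> where \<phi>: "\<phi> ` Field omega1 = \<K>" ..
  have avoid: "\<exists>y. y \<in> C \<and> (\<forall>\<beta>\<in>under omega1 \<alpha>. y \<notin> \<phi> \<beta>)" for \<alpha>
  proof -
    have "under omega1 \<alpha> \<subseteq> Field omega1" unfolding under_def by (auto intro: FieldI1)
    then have "\<not> C \<subseteq> \<Union>(\<phi> ` under omega1 \<alpha>)"
      using \<phi> by (intro not_covered countable_image countable_under_omega1) blast
    then show ?thesis by blast
  qed
  define x where "x \<alpha> = (SOME y. y \<in> C \<and> (\<forall>\<beta>\<in>under omega1 \<alpha>. y \<notin> \<phi> \<beta>))" for \<alpha>
  have x: "x \<alpha> \<in> C" "\<And>\<beta>. \<beta> \<in> under omega1 \<alpha> \<Longrightarrow> x \<alpha> \<notin> \<phi> \<beta>" for \<alpha>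
    using someI_ex[OF avoid[of \<alpha>]] unfolding x_def by blast+
  have "countable {\<alpha> \<in> Field omega1. x \<alpha> \<in> \<phi> \<beta>}" if "\<beta> \<in> Field omega1" for \<beta>
  proof -
    have "{\<alpha> \<in> Field omega1. x \<alpha> \<in> \<phi> \<beta>} \<subseteq> {\<alpha> \<in> Field omega1. (\<beta>, \<alpha>) \<notin> omega1}"
      using x(2) unfolding under_def by blast
    then show ?thesis using countable_not_above_omega1[OF that] by (rule countable_subset)
  qed
  then have "\<forall>K\<in>\<K>. countable {\<alpha> \<in> Field omega1. x \<alpha> \<in> K}" unfolding \<phi>[symmetric] by blast
  moreover have "x ` Field omega1 \<subseteq> C" using x(1) by blast
  ultimately show ?thesis by blast
qed

lemma ex_omega1_subset_meeting_sets_countably: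
  assumes card: "|\<K>| \<le>o omega1" and cover: "\<Union>\<K> = UNIV"
    and not_covered: "\<And>\<K>'. \<K>' \<subseteq> \<K> \<Longrightarrow> countable \<K>' \<Longrightarrow> \<not> C \<subseteq> \<Union>\<K>'"
  shows "\<exists>S\<subseteq>C. |S| =o omega1 \<and> (\<forall>K\<in>\<K>. countable (S \<inter> K))"
proof -
  have "\<K> \<noteq> {}" using cover by auto
  then have "\<exists>x. x ` Field omega1 \<subseteq> C \<and> (\<forall>K\<in>\<K>. countable {\<alpha> \<in> Field omega1. x \<alpha> \<in> K})"
    by (rule ex_omega1_sequence_meeting_sets_countably[OF card _ not_covered])
  then obtain x where x: "x ` Field omega1 \<subseteq> C"
    and countable_K: "\<forall>K\<in>\<K>. countable {\<alpha> \<in> Field omega1. x \<alpha> \<in> K}"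
    by blast
  have "countable {\<alpha> \<in> Field omega1. x \<alpha> = s}" for s
  proof -
    have "s \<in> \<Union>\<K>" using cover by simp
    then obtain K where "K \<in> \<K>" "s \<in> K" ..
    then have "{\<alpha> \<in> Field omega1. x \<alpha> = s} \<subseteq> {\<alpha> \<in> Field omega1. x \<alpha> \<in> K}" by blast
    then show ?thesis using bspec[OF countable_K \<open>K \<in> \<K>\<close>] by (rule countable_subset)
  qed
  then have "|x ` Field omega1| =o omega1" by (rule card_of_image_Field_omega1)
  moreover have "countable (x ` Field omega1 \<inter> K)" if "K \<in> \<K>" for K
  proof -
    have "x ` Field omega1 \<inter> K = x ` {\<alpha> \<in> Field omega1. x \<alpha> \<in> K}" by blast
    then show ?thesis using bspec[OF countable_K that] by simp
  qed
  ultimately show ?thesis using x by blast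
qed

section \<open>Density character and cardinality\<close>

lemma has_dens_ordIso:
  assumes "has_dens r TYPE('a::topological_space)" "(r', r) \<in> ordIso"
  shows "has_dens r' TYPE('a)"
  using assms unfolding has_dens_def
  by (meson ordIso_symmetric ordIso_transitive ordIso_ordLeq_trans)

lemma card_of_Pow_nat_ordIso_omega1: "CH \<Longrightarrow> |UNIV :: nat set set| =o omega1"
  unfolding CH_def
  using nat_sets_eqpoll_reals eqpoll_iff_card_of_ordIso ordIso_transitive by blast

lemma card_of_UNIV_ordLeq_Pow_nat_if_dense:
  fixes D :: "'a::metric_space set"
  assumes dense: "closure D = UNIV" and card: "|D| \<le>o |UNIV :: nat set set|"
  shows "|UNIV :: 'a set| \<le>o |UNIV :: nat set set|"
proof -
  obtain j :: "'a \<Rightarrow> nat set" where j: "inj_on j D"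
    using card card_of_ordLeq[symmetric, of D "UNIV :: nat set set"] by blast
  \<comment> \<open>a point is the limit of a sequence in \<open>D\<close>, which \<open>j\<close> codes as one set of naturals\<close>
  have "\<forall>x. \<exists>\<sigma>. (\<forall>n. \<sigma> n \<in> D) \<and> \<sigma> \<longlonglongrightarrow> x"
    using dense closure_sequential by blast
  then obtain s where s: "\<And>x n. s x n \<in> D" "\<And>x. s x \<longlonglongrightarrow> x" by metis
  define E where "E x = {prod_encode (n, k) | n k. k \<in> j (s x n)}" for x
  have "inj E"
  proof (rule injI)
    fix x y assume "E x = E y"
    have "j (s x n) = j (s y n)" for n
    proof -
      have "k \<in> j (s z n) \<longleftrightarrow> prod_encode (n, k) \<in> E z" for z k
        unfolding E_def by (auto dest: inj_onD[OF inj_prod_encode, of "(n, k)", simplified])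
      then show ?thesis using \<open>E x = E y\<close> by blast
    qed
    then have "s x n = s y n" for n using j s(1) inj_onD by metis
    then have "s x = s y" by blast
    then show "x = y" using s(2) LIMSEQ_unique by metis
  qed
  then show ?thesis using card_of_ordLeq[symmetric, of UNIV "UNIV :: nat set set"] by blast
qed

lemma card_of_UNIV_ordLeq_omega1:
  assumes "CH" "has_dens omega1 TYPE('a::metric_space)"
  shows "|UNIV :: 'a set| \<le>o omega1"
proof -
  have P: "|UNIV :: nat set set| =o omega1" using assms(1) by (rule card_of_Pow_nat_ordIso_omega1)
  obtain D :: "'a set" where D: "closure D = UNIV" "|D| =o omega1"
    using assms(2) unfolding has_dens_def by blast
  have "|D| \<le>o |UNIV :: nat set set|"
    using D(2) P ordIso_symmetric ordIso_transitive ordIso_iff_ordLeq by blast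
  with D(1) have "|UNIV :: 'a set| \<le>o |UNIV :: nat set set|"
    by (rule card_of_UNIV_ordLeq_Pow_nat_if_dense)
  then show ?thesis using P ordLeq_ordIso_trans by blast
qed

lemma range_scaleR_neq_UNIV:
  assumes "has_dens omega1 TYPE('a::real_normed_vector)"
  shows "range (\<lambda>r. r *\<^sub>R g) \<noteq> (UNIV :: 'a set)"
proof
  assume line: "range (\<lambda>r. r *\<^sub>R g) = UNIV"
  define D where "D = (\<lambda>r. r *\<^sub>R g) ` \<rat>"
  have "(\<lambda>r. r *\<^sub>R g) ` closure \<rat> \<subseteq> closure D"
    unfolding D_def by (rule image_closure_subset) (auto intro: closure_subset[THEN subsetD] continuous_intros)
  then have "closure D = UNIV" using line by (auto simp: Rats_closure_real)
  then have "omega1 \<le>o |D|" using assms unfolding has_dens_def by blast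
  moreover have "countable D" unfolding D_def by (simp add: countable_rat)
  ultimately show False using uncountable_iff_omega1_ordLeq by blast
qed

lemma ex_hyperplane_through:
  fixes x :: "'a::real_normed_vector"
  assumes "has_dens omega1 TYPE('a \<Rightarrow>\<^sub>L real)"
  shows "\<exists>H. hyperplane H \<and> x \<in> H"
proof -
  obtain g :: "'a \<Rightarrow>\<^sub>L real" where g: "g \<notin> range (\<lambda>r. r *\<^sub>R 0)"
    using range_scaleR_neq_UNIV[OF assms] by blast
  obtain h :: "'a \<Rightarrow>\<^sub>L real" where h: "h \<notin> range (\<lambda>r. r *\<^sub>R g)"
    using range_scaleR_neq_UNIV[OF assms] by blast
  define f where "f = (if g x = 0 then g else h - (h x / g x) *\<^sub>R g)"
  have "f \<noteq> 0"
    using g h unfolding f_def by (auto simp: algebra_simps)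
  moreover have "f x = 0" unfolding f_def by (simp add: blinfun.diff_left blinfun.scaleR_left)
  ultimately show ?thesis unfolding hyperplane_def by blast
qed

lemma card_of_hyperplanes_ordLeq:
  "|Collect hyperplane :: 'a::real_normed_vector set set| \<le>o |UNIV :: ('a \<Rightarrow>\<^sub>L real) set|"
proof -
  have "Collect hyperplane \<subseteq> (\<lambda>f::'a \<Rightarrow>\<^sub>L real. {x. blinfun_apply f x = 0}) ` UNIV"
    unfolding hyperplane_def by blast
  then have "|Collect hyperplane :: 'a set set| \<le>o |(\<lambda>f::'a \<Rightarrow>\<^sub>L real. {x. blinfun_apply f x = 0}) ` UNIV|"
    by (rule card_of_mono1)
  then show ?thesis by (rule ordLeq_transitive[OF _ card_of_image])
qed

section \<open>Hahn-Banach extension of dominated functionals\<close>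

definition sublinear :: "('a::real_vector \<Rightarrow> real) \<Rightarrow> bool" where
  "sublinear p \<longleftrightarrow> (\<forall>x y. p (x + y) \<le> p x + p y) \<and> (\<forall>c x. 0 < c \<longrightarrow> p (c *\<^sub>R x) = c * p x)"

text \<open>A partial linear functional is represented by its graph \<open>G\<close>, with domain \<open>fst ` G\<close>.\<close>

definition dominated_graph :: "('a::real_vector \<Rightarrow> real) \<Rightarrow> ('a \<times> real) set \<Rightarrow> bool" where
  "dominated_graph p G \<longleftrightarrow>
     (\<forall>x a b. (x, a) \<in> G \<longrightarrow> (x, b) \<in> G \<longrightarrow> a = b) \<and>
     (\<forall>x a y b. (x, a) \<in> G \<longrightarrow> (y, b) \<in> G \<longrightarrow> (x + y, a + b) \<in> G) \<and>
     (\<forall>x a c. (x, a) \<in> G \<longrightarrow> (c *\<^sub>R x, c * a) \<in> G) \<and>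
     (\<forall>x a. (x, a) \<in> G \<longrightarrow> a \<le> p x)"

lemma dominated_graphD:
  assumes "dominated_graph p G"
  shows dominated_graph_unique: "(x, a) \<in> G \<Longrightarrow> (x, b) \<in> G \<Longrightarrow> a = b"
    and dominated_graph_add: "(x, a) \<in> G \<Longrightarrow> (y, b) \<in> G \<Longrightarrow> (x + y, a + b) \<in> G"
    and dominated_graph_scaleR: "(x, a) \<in> G \<Longrightarrow> (c *\<^sub>R x, c * a) \<in> G"
    and dominated_graph_le: "(x, a) \<in> G \<Longrightarrow> a \<le> p x"
  using assms unfolding dominated_graph_def by blast+

lemma dominated_graph_zero:
  assumes "dominated_graph p G" "G \<noteq> {}"
  shows "(0, 0) \<in> G"
proof -
  obtain x a where "(x, a) \<in> G" using assms(2) by auto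
  then show ?thesis using dominated_graph_scaleR[OF assms(1), of x a 0] by simp
qed

lemma subspace_fst_dominated_graph:
  assumes "dominated_graph p G" "G \<noteq> {}"
  shows "subspace (fst ` G)"
  unfolding subspace_def
proof (intro conjI ballI allI)
  show "0 \<in> fst ` G" using dominated_graph_zero[OF assms] by force
next
  fix x y assume "x \<in> fst ` G" "y \<in> fst ` G"
  then obtain a b where "(x, a) \<in> G" "(y, b) \<in> G" by force
  then show "x + y \<in> fst ` G" using dominated_graph_add[OF assms(1)] by force
next
  fix c x assume "x \<in> fst ` G"
  then obtain a where "(x, a) \<in> G" by force
  then show "c *\<^sub>R x \<in> fst ` G" using dominated_graph_scaleR[OF assms(1)] by force
qed

lemma dominated_graph_chain_Union:
  assumes "\<C> \<in> chains {G. dominated_graph p G}"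
  shows "dominated_graph p (\<Union>\<C>)"
proof -
  have dom: "\<And>G. G \<in> \<C> \<Longrightarrow> dominated_graph p G"
    and chain: "\<And>G H. G \<in> \<C> \<Longrightarrow> H \<in> \<C> \<Longrightarrow> G \<subseteq> H \<or> H \<subseteq> G"
    using assms unfolding chains_def chain_subset_def by auto
  have common: "\<exists>G\<in>\<C>. u \<in> G \<and> v \<in> G" if uv: "u \<in> \<Union>\<C>" "v \<in> \<Union>\<C>" for u v
  proof -
    obtain G H where "G \<in> \<C>" "H \<in> \<C>" "u \<in> G" "v \<in> H" using uv by blast
    then show ?thesis using chain[of G H] by blast
  qed
  show ?thesis
    unfolding dominated_graph_def
  proof (intro conjI allI impI)
    fix x a b assume "(x, a) \<in> \<Union>\<C>" "(x, b) \<in> \<Union>\<C>"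
    then obtain G where "G \<in> \<C>" "(x, a) \<in> G" "(x, b) \<in> G" using common by blast
    then show "a = b" using dom dominated_graph_unique by blast
  next
    fix x a y b assume "(x, a) \<in> \<Union>\<C>" "(y, b) \<in> \<Union>\<C>"
    then obtain G where "G \<in> \<C>" "(x, a) \<in> G" "(y, b) \<in> G" using common by blast
    then show "(x + y, a + b) \<in> \<Union>\<C>" using dom dominated_graph_add by blast
  next
    fix x a c assume "(x, a) \<in> \<Union>\<C>"
    then show "(c *\<^sub>R x, c * a) \<in> \<Union>\<C>" using dom dominated_graph_scaleR by blast
  next
    fix x a assume "(x, a) \<in> \<Union>\<C>"
    then show "a \<le> p x" using dom dominated_graph_le by blast
  qed
qed

lemma subspace_decomposition_unique:
  assumes "subspace M" "x0 \<notin> M" "m \<in> M" "m' \<in> M" "m + t *\<^sub>R x0 = m' + t' *\<^sub>R x0"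
  shows "t = t'"
proof (rule ccontr)
  assume "t \<noteq> t'"
  have "(t - t') *\<^sub>R x0 = m' - m"
    using assms(5) by (simp add: algebra_simps)
  then have "x0 = (1 / (t - t')) *\<^sub>R (m' - m)"
    using \<open>t \<noteq> t'\<close> by (simp add: eq_vector_fraction_iff)
  moreover have "(1 / (t - t')) *\<^sub>R (m' - m) \<in> M"
    using assms(1,3,4) by (simp add: subspace_scale subspace_diff)
  ultimately show False using assms(2) by simp
qed

lemma dominated_graph_adjoin:
  assumes G: "dominated_graph p G" "G \<noteq> {}" and x0: "x0 \<notin> fst ` G"
    and le: "\<And>y a t. (y, a) \<in> G \<Longrightarrow> a + t * c \<le> p (y + t *\<^sub>R x0)"
  shows "dominated_graph p {(y + t *\<^sub>R x0, a + t * c) | y a t. (y, a) \<in> G}"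
    (is "dominated_graph p ?G'")
proof -
  have M: "subspace (fst ` G)" by (rule subspace_fst_dominated_graph[OF G])
  show ?thesis
    unfolding dominated_graph_def
  proof (intro conjI allI impI)
    fix x a b assume "(x, a) \<in> ?G'" "(x, b) \<in> ?G'"
    then obtain y1 a1 t1 y2 a2 t2 where
      1: "(y1, a1) \<in> G" "x = y1 + t1 *\<^sub>R x0" "a = a1 + t1 * c" and
      2: "(y2, a2) \<in> G" "x = y2 + t2 *\<^sub>R x0" "b = a2 + t2 * c"
      by blast
    have "t1 = t2"
      using subspace_decomposition_unique[OF M x0, of y1 y2 t1 t2] 1 2 by force
    then have "y1 = y2" using 1(2) 2(2) by simp
    then show "a = b" using 1 2 \<open>t1 = t2\<close> dominated_graph_unique[OF G(1)] by blast
  next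
    fix x a y b assume "(x, a) \<in> ?G'" "(y, b) \<in> ?G'"
    then obtain y1 a1 t1 y2 a2 t2 where
      "(y1, a1) \<in> G" "x = y1 + t1 *\<^sub>R x0" "a = a1 + t1 * c" and
      "(y2, a2) \<in> G" "y = y2 + t2 *\<^sub>R x0" "b = a2 + t2 * c"
      by blast
    moreover have "(y1 + y2, a1 + a2) \<in> G"
      using calculation dominated_graph_add[OF G(1)] by blast
    moreover have "(x + y, a + b) = ((y1 + y2) + (t1 + t2) *\<^sub>R x0, (a1 + a2) + (t1 + t2) * c)"
      using calculation by (simp add: algebra_simps)
    ultimately show "(x + y, a + b) \<in> ?G'" by blast
  next
    fix x a r assume "(x, a) \<in> ?G'"
    then obtain y1 a1 t1 where "(y1, a1) \<in> G" "x = y1 + t1 *\<^sub>R x0" "a = a1 + t1 * c"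
      by blast
    moreover have "(r *\<^sub>R y1, r * a1) \<in> G"
      using calculation dominated_graph_scaleR[OF G(1)] by blast
    moreover have "(r *\<^sub>R x, r * a) = (r *\<^sub>R y1 + (r * t1) *\<^sub>R x0, r * a1 + (r * t1) * c)"
      using calculation by (simp add: algebra_simps)
    ultimately show "(r *\<^sub>R x, r * a) \<in> ?G'" by blast
  next
    fix x a assume "(x, a) \<in> ?G'"
    then show "a \<le> p x" using le by blast
  qed
qed

lemma sublinear_adjoin_bounds:
  assumes p: "sublinear p" and G: "dominated_graph p G" "G \<noteq> {}"
  obtains c where "\<And>y a. (y, a) \<in> G \<Longrightarrow> a - p (y - x0) \<le> c"
    and "\<And>z b. (z, b) \<in> G \<Longrightarrow> c \<le> p (z + x0) - b"
proof -
  have sep: "a - p (y - x0) \<le> p (z + x0) - b" if "(y, a) \<in> G" "(z, b) \<in> G" for y a z b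
  proof -
    have "a + b \<le> p ((y - x0) + (z + x0))"
      using dominated_graph_le[OF G(1) dominated_graph_add[OF G(1) that]] by simp
    then show ?thesis using p unfolding sublinear_def by (smt (verit))
  qed
  define L where "L = {a - p (y - x0) | y a. (y, a) \<in> G}"
  have "(0, 0) \<in> G" by (rule dominated_graph_zero[OF G])
  then have "L \<noteq> {}" "bdd_above L"
    unfolding L_def bdd_above_def using sep by blast+
  then show ?thesis
    using that[of "Sup L"] sep unfolding L_def by (auto intro!: cSup_upper cSup_least)
qed

lemma sublinear_adjoin_value:
  assumes p: "sublinear p" and G: "dominated_graph p G" "G \<noteq> {}"
  shows "\<exists>c. \<forall>y a t. (y, a) \<in> G \<longrightarrow> a + t * c \<le> p (y + t *\<^sub>R x0)"
proof -
  have p_scale: "p (t *\<^sub>R u) = t * p u" if "t > 0" for t u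
    using p that unfolding sublinear_def by blast
  obtain c where c_ge: "\<And>y a. (y, a) \<in> G \<Longrightarrow> a - p (y - x0) \<le> c"
    and c_le: "\<And>z b. (z, b) \<in> G \<Longrightarrow> c \<le> p (z + x0) - b"
    using sublinear_adjoin_bounds[OF p G] by blast
  have "a + t * c \<le> p (y + t *\<^sub>R x0)" if ya: "(y, a) \<in> G" for y a t
  proof (cases t "0 :: real" rule: linorder_cases)
    case less
    define s where "s = - t"
    have s: "s > 0" using less s_def by simp
    have "(1 / s) * a - p ((1 / s) *\<^sub>R y - x0) \<le> c"
      using c_ge[OF dominated_graph_scaleR[OF G(1) ya]] .
    then have "s * ((1 / s) * a - p ((1 / s) *\<^sub>R y - x0)) \<le> s * c"
      using s by (simp add: mult_left_mono)
    moreover have "s * p ((1 / s) *\<^sub>R y - x0) = p (y + t *\<^sub>R x0)"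
      using p_scale[OF s, of "(1 / s) *\<^sub>R y - x0"] s s_def by (simp add: scaleR_diff_right)
    ultimately show ?thesis using s s_def by (simp add: right_diff_distrib)
  next
    case equal
    then show ?thesis using dominated_graph_le[OF G(1) ya] by simp
  next
    case greater
    have "c \<le> p ((1 / t) *\<^sub>R y + x0) - (1 / t) * a"
      using c_le[OF dominated_graph_scaleR[OF G(1) ya]] .
    then have "t * c \<le> t * (p ((1 / t) *\<^sub>R y + x0) - (1 / t) * a)"
      using greater by (simp add: mult_left_mono)
    moreover have "t * p ((1 / t) *\<^sub>R y + x0) = p (y + t *\<^sub>R x0)"
      using p_scale[OF greater, of "(1 / t) *\<^sub>R y + x0"] greater by (simp add: scaleR_add_right)
    ultimately show ?thesis using greater by (simp add: right_diff_distrib)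
  qed
  then show ?thesis by blast
qed

lemma ex_maximal_dominated_graph:
  assumes G0: "dominated_graph p G0" "G0 \<noteq> {}"
  shows "\<exists>M. dominated_graph p M \<and> G0 \<subseteq> M \<and> (\<forall>G. dominated_graph p G \<longrightarrow> M \<subseteq> G \<longrightarrow> G = M)"
proof -
  let ?A = "{G. dominated_graph p G \<and> G0 \<subseteq> G}"
  have "\<forall>\<C>\<in>chains ?A. \<exists>U\<in>?A. \<forall>G\<in>\<C>. G \<subseteq> U"
  proof
    fix \<C> assume \<C>: "\<C> \<in> chains ?A"
    show "\<exists>U\<in>?A. \<forall>G\<in>\<C>. G \<subseteq> U"
    proof (cases "\<C> = {}")
      case True
      then show ?thesis using G0 by blast
    next
      case False
      have "\<C> \<in> chains {G. dominated_graph p G}"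
        using \<C> unfolding chains_def chain_subset_def by blast
      then have "dominated_graph p (\<Union>\<C>)" by (rule dominated_graph_chain_Union)
      moreover have "G0 \<subseteq> \<Union>\<C>" using \<C> False unfolding chains_def by blast
      ultimately show ?thesis by blast
    qed
  qed
  then have "\<exists>M\<in>?A. \<forall>G\<in>?A. M \<subseteq> G \<longrightarrow> G = M" by (rule Zorn_Lemma2)
  then obtain M where "M \<in> ?A" and max: "\<forall>G\<in>?A. M \<subseteq> G \<longrightarrow> G = M" ..
  then have "dominated_graph p M" "G0 \<subseteq> M" by simp_all
  moreover have "G = M" if "dominated_graph p G" "M \<subseteq> G" for G
  proof -
    have "G \<in> ?A" using that \<open>G0 \<subseteq> M\<close> by blast
    then show ?thesis using max that(2) by blast
  qed
  ultimately show ?thesis by blast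
qed

lemma maximal_dominated_graph_total:
  assumes p: "sublinear p" and M: "dominated_graph p M" "M \<noteq> {}"
    and max: "\<And>G. dominated_graph p G \<Longrightarrow> M \<subseteq> G \<Longrightarrow> G = M"
  shows "\<exists>a. (x, a) \<in> M"
proof (rule ccontr)
  assume none: "\<nexists>a. (x, a) \<in> M"
  then have x: "x \<notin> fst ` M" by (auto simp: fst_eq_Domain)
  obtain c where c: "\<And>y a t. (y, a) \<in> M \<Longrightarrow> a + t * c \<le> p (y + t *\<^sub>R x)"
    using sublinear_adjoin_value[OF p M] by blast
  let ?M' = "{(y + t *\<^sub>R x, a + t * c) | y a t. (y, a) \<in> M}"
  have in_M': "(y + t *\<^sub>R x, a + t * c) \<in> ?M'" if "(y, a) \<in> M" for y a t
    using that by blast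
  have "M \<subseteq> ?M'"
  proof (rule subrelI)
    show "(y, a) \<in> ?M'" if "(y, a) \<in> M" for y a
      using in_M'[OF that, of 0] by (simp only: scaleR_zero_left mult_zero_left add_0_right)
  qed
  with dominated_graph_adjoin[OF M x c] have "?M' = M" by (rule max)
  moreover have "(x, c) \<in> ?M'"
    using in_M'[OF dominated_graph_zero[OF M], of 1] by (simp only: scaleR_one mult_1 add_0)
  ultimately show False using none by blast
qed

lemma total_dominated_graph_linear:
  assumes M: "dominated_graph p M" and total: "\<And>x. \<exists>a. (x, a) \<in> M"
  shows "\<exists>F. linear F \<and> (\<forall>(x, a) \<in> M. F x = a) \<and> (\<forall>x. F x \<le> p x)"
proof -
  define F where "F x = (THE a. (x, a) \<in> M)" for x
  have FM: "(x, F x) \<in> M" for x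
  proof -
    obtain a where a: "(x, a) \<in> M" using total by blast
    show ?thesis
      unfolding F_def by (rule theI[of _ a]) (fact a, erule dominated_graph_unique[OF M _ a])
  qed
  have F_eq: "F x = a" if "(x, a) \<in> M" for x a
    using dominated_graph_unique[OF M FM that] .
  have "linear F"
  proof
    show "F (x + y) = F x + F y" for x y
      by (rule F_eq) (rule dominated_graph_add[OF M FM FM])
    show "F (c *\<^sub>R x) = c *\<^sub>R F x" for c x
      using F_eq[OF dominated_graph_scaleR[OF M FM]] by simp
  qed
  moreover have "\<forall>(x, a) \<in> M. F x = a" using F_eq by blast
  moreover have "\<forall>x. F x \<le> p x" using dominated_graph_le[OF M FM] by blast
  ultimately show ?thesis by blast
qed

theorem Hahn_Banach_dominated_graph:
  assumes p: "sublinear p" and G0: "dominated_graph p G0" "G0 \<noteq> {}"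
  shows "\<exists>F. linear F \<and> (\<forall>(x, a) \<in> G0. F x = a) \<and> (\<forall>x. F x \<le> p x)"
proof -
  obtain M where M: "dominated_graph p M" "G0 \<subseteq> M"
    and max: "\<And>G. dominated_graph p G \<Longrightarrow> M \<subseteq> G \<Longrightarrow> G = M"
    using ex_maximal_dominated_graph[OF G0] by blast
  have "M \<noteq> {}" using M(2) G0(2) by blast
  then have "\<exists>a. (x, a) \<in> M" for x
    using maximal_dominated_graph_total[OF p M(1) _ max] by blast
  then obtain F where F: "linear F" "\<forall>(x, a) \<in> M. F x = a" "\<forall>x. F x \<le> p x"
    using total_dominated_graph_linear[OF M(1)] by blast
  moreover have "\<forall>(x, a) \<in> G0. F x = a" using F(2) M(2) by auto
  ultimately show ?thesis by blast
qed

lemma subspace_abs_infdist_le_norm: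
  assumes "subspace M" "m \<in> M"
  shows "\<bar>t\<bar> * infdist x0 M \<le> norm (m + t *\<^sub>R x0)"
proof (cases "t = 0")
  case False
  have "- ((1 / t) *\<^sub>R m) \<in> M"
    using assms by (simp add: subspace_scale subspace_neg)
  then have "infdist x0 M \<le> norm (x0 + (1 / t) *\<^sub>R m)"
    using infdist_le by (fastforce simp: dist_norm)
  then have "\<bar>t\<bar> * infdist x0 M \<le> \<bar>t\<bar> * norm (x0 + (1 / t) *\<^sub>R m)"
    by (simp add: mult_left_mono)
  also have "\<dots> = norm (t *\<^sub>R (x0 + (1 / t) *\<^sub>R m))" by simp
  also have "t *\<^sub>R (x0 + (1 / t) *\<^sub>R m) = m + t *\<^sub>R x0"
    using False by (simp add: scaleR_add_right)
  finally show ?thesis .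
qed simp

lemma bounded_linear_if_le_norm:
  fixes F :: "'a::real_normed_vector \<Rightarrow> real"
  assumes F: "linear F" and le: "\<And>x. F x \<le> K * norm x"
  shows "bounded_linear F"
proof (rule bounded_linear_intro[where K = K])
  show "F (x + y) = F x + F y" "F (r *\<^sub>R x) = r *\<^sub>R F x" for x y r
    using F by (simp_all add: linear_add linear_scale)
  show "norm (F x) \<le> norm x * K" for x
    using le[of x] le[of "- x"] linear_neg[OF F, of x] by (simp add: mult.commute)
qed

theorem ex_nonzero_blinfun_vanishing_on_subspace:
  fixes M :: "'a::real_normed_vector set"
  assumes M: "subspace M" and x0: "x0 \<notin> closure M"
  shows "\<exists>f::'a \<Rightarrow>\<^sub>L real. f \<noteq> 0 \<and> (\<forall>m\<in>M. blinfun_apply f m = 0)"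
proof -
  have "0 \<in> M" using M by (rule subspace_0)
  define d where "d = infdist x0 M"
  have "d \<noteq> 0" using x0 \<open>0 \<in> M\<close> in_closure_iff_infdist_zero unfolding d_def by blast
  then have d: "d > 0" using infdist_nonneg[of x0 M] unfolding d_def by linarith
  define p where "p x = norm x / d" for x :: 'a
  have p: "sublinear p"
    unfolding sublinear_def p_def using d
    by (simp add: divide_right_mono norm_triangle_ineq flip: add_divide_distrib)
  have G: "dominated_graph p (M \<times> {0})" "M \<times> {0} \<noteq> {}"
    unfolding dominated_graph_def p_def using M \<open>0 \<in> M\<close> d
    by (auto simp: subspace_add subspace_scale)
  have "x0 \<notin> fst ` (M \<times> {0})" using x0 closure_subset by auto
  \<comment> \<open>extending by \<open>x0 \<mapsto> 1\<close> respects \<open>p\<close> precisely because \<open>d\<close> is the distance from \<open>x0\<close> to \<open>M\<close>\<close>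
  moreover have "a + t * 1 \<le> p (y + t *\<^sub>R x0)" if "(y, a) \<in> M \<times> {0}" for y a t
  proof -
    have "\<bar>t\<bar> * d \<le> norm (y + t *\<^sub>R x0)"
      using subspace_abs_infdist_le_norm[OF M, of y t x0] that unfolding d_def by simp
    then have "t * d \<le> norm (y + t *\<^sub>R x0)"
      using d by (smt (verit) abs_ge_self mult_right_mono)
    then show ?thesis using that d unfolding p_def by (simp add: pos_le_divide_eq)
  qed
  ultimately have "dominated_graph p {(y + t *\<^sub>R x0, a + t * 1) | y a t. (y, a) \<in> M \<times> {0}}"
    (is "dominated_graph p ?G'")
    by (rule dominated_graph_adjoin[OF G])
  moreover have "?G' \<noteq> {}" using G(2) by blast
  ultimately obtain F where F: "linear F" "\<forall>(x, a) \<in> ?G'. F x = a" "\<And>x. F x \<le> p x"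
    using Hahn_Banach_dominated_graph[OF p] by blast
  have F_G': "F x = a" if "(x, a) \<in> ?G'" for x a
    using bspec[OF F(2) that] by simp
  have "(0 + 1 *\<^sub>R x0, 0 + 1 * 1) \<in> ?G'" using \<open>0 \<in> M\<close> by blast
  then have "F x0 = 1" using F_G' by simp
  have F_M: "F m = 0" if "m \<in> M" for m
  proof -
    have "(m + 0 *\<^sub>R x0, 0 + 0 * 1) \<in> ?G'" using that by blast
    then show ?thesis using F_G' by simp
  qed
  have "bounded_linear F"
    using F(1) by (rule bounded_linear_if_le_norm[where K = "1 / d"]) (simp add: F(3)[unfolded p_def])
  then have "Blinfun F \<noteq> 0 \<and> (\<forall>m\<in>M. blinfun_apply (Blinfun F) m = 0)"
    using \<open>F x0 = 1\<close> F_M by (metis bounded_linear_Blinfun_apply blinfun.zero_left zero_neq_one)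
  then show ?thesis by blast
qed

section \<open>Overcomplete sets\<close>

lemma overcomplete_if_countable_on_hyperplanes:
  fixes S :: "'a::real_normed_vector set"
  assumes dens: "has_dens omega1 TYPE('a)" and S: "|S| =o omega1"
    and countable: "\<And>H. hyperplane H \<Longrightarrow> countable (S \<inter> H)"
  shows "overcomplete S"
  unfolding overcomplete_def
proof (intro conjI allI impI)
  show "has_dens |S| TYPE('a)" using dens S by (rule has_dens_ordIso)
next
  fix \<Lambda> assume \<Lambda>: "\<Lambda> \<subseteq> S" "|\<Lambda>| =o |S|"
  show "closure (span \<Lambda>) = UNIV"
  proof (rule ccontr)
    assume "closure (span \<Lambda>) \<noteq> UNIV"
    then obtain x0 where "x0 \<notin> closure (span \<Lambda>)" by blast
    then obtain f :: "'a \<Rightarrow>\<^sub>L real" where f: "f \<noteq> 0" "\<forall>m\<in>span \<Lambda>. blinfun_apply f m = 0"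
      using ex_nonzero_blinfun_vanishing_on_subspace[OF subspace_span] by blast
    have "hyperplane {x. blinfun_apply f x = 0}" using f(1) unfolding hyperplane_def by blast
    moreover have "\<Lambda> \<subseteq> S \<inter> {x. blinfun_apply f x = 0}" using \<Lambda>(1) f(2) span_superset by blast
    ultimately have "countable \<Lambda>" using countable countable_subset by blast
    moreover have "|\<Lambda>| =o omega1" using \<Lambda>(2) S by (rule ordIso_transitive)
    ultimately show False using uncountable_if_ordIso_omega1 by blast
  qed
qed

theorem theorem3p1:
  fixes C :: "'a::banach set"
  assumes CH: "CH"
    and densX: "has_dens omega1 TYPE('a)"
    and densXstar: "has_dens omega1 TYPE('a \<Rightarrow>\<^sub>L real)"
    and not_covered: "\<not> (\<exists>\<H>. countable \<H> \<and> (\<forall>H\<in>\<H>. hyperplane H) \<and> C \<subseteq> \<Union>\<H>)"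
  shows "\<exists>S\<subseteq>C. overcomplete S"
proof -
  have card: "|Collect hyperplane :: 'a set set| \<le>o omega1"
    using card_of_hyperplanes_ordLeq card_of_UNIV_ordLeq_omega1[OF CH densXstar]
    by (rule ordLeq_transitive)
  moreover have "\<Union>(Collect hyperplane) = (UNIV :: 'a set)"
    using ex_hyperplane_through[OF densXstar] by blast
  moreover have "\<not> C \<subseteq> \<Union>\<H>" if "\<H> \<subseteq> Collect hyperplane" "countable \<H>" for \<H>
    using not_covered that by blast
  ultimately have "\<exists>S\<subseteq>C. |S| =o omega1 \<and> (\<forall>H\<in>Collect hyperplane. countable (S \<inter> H))"
    by (rule ex_omega1_subset_meeting_sets_countably)
  then obtain S where "S \<subseteq> C" "|S| =o omega1" "\<forall>H\<in>Collect hyperplane. countable (S \<inter> H)"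
    by blast
  then have "overcomplete S"
    using overcomplete_if_countable_on_hyperplanes[OF densX] by simp
  then show ?thesis using \<open>S \<subseteq> C\<close> by blast
qed

end
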